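(* Let $\mathbb{K}$ be a field. Every variety $X_{\mathbb{E}_6}(\boldsymbol{\alpha})$ (with $\boldsymbol{\alpha}$ a family of invertible elements of $\mathbb{K}$) is isomorphic to $X_{\mathbb{E}_6}(1,\dots,1)$. Every variety $X_{\mathbb{E}_7}(\boldsymbol{\alpha})$ is isomorphic to $X_{\mathbb{E}_7}(1,\dots,1,\alpha)$ for some $\alpha\in\mathbb{K}^*$, where $\alpha$ is the value on the last vertex (the leaf) of the long branch of $\mathbb{E}_7$ and all other values are $1$. Every variety $X_{\mathbb{E}_8}(\boldsymbol{\alpha})$ is isomorphic to $X_{\mathbb{E}_8}(1,\dots,1)$.
   Context: For a finite tree $T$ and a family $\boldsymbol{\alpha}=(\alpha_t)_{t\in T}$ of invertible elements of $\mathbb{K}$, $X_T(\boldsymbol{\alpha})$ is the affine variety over $\mathbb{K}$ with coordinates $x_t,x'_t$ ($t\in T$) defined by $x_tx'_t=1+\alpha_t\prod_{s-t}x_s$, the product over the neighbors $s$ of $t$. For $m=6,7,8$, $\mathbb{E}_m$ is the tree with a central vertex from which three branches (paths) emanate, containing $1$, $2$ and $m-4$ further vertices respectively; the long branch is the one with $m-4$ vertices. *)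

theory Defs
  imports "HOL-Library.Poly_Mapping"
begin

type_synonym 'a mpoly = "(nat \<Rightarrow>\<^sub>0 nat) \<Rightarrow>\<^sub>0 'a"

definition Var :: "nat \<Rightarrow> 'a::comm_ring_1 mpoly" where
  "Var i = Poly_Mapping.single (Poly_Mapping.single i 1) 1"

definition Const :: "'a::comm_ring_1 \<Rightarrow> 'a mpoly" where
  "Const c = Poly_Mapping.single 0 c"

definition vars :: "'a::comm_ring_1 mpoly \<Rightarrow> nat set" where
  "vars p = \<Union> (Poly_Mapping.keys ` Poly_Mapping.keys p)"

definition subst :: "(nat \<Rightarrow> 'a::comm_ring_1 mpoly) \<Rightarrow> 'a mpoly \<Rightarrow> 'a mpoly" where
  "subst \<sigma> p = (\<Sum>m\<in>Poly_Mapping.keys p.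
      Const (Poly_Mapping.lookup p m) * (\<Prod>i\<in>Poly_Mapping.keys m. \<sigma> i ^ Poly_Mapping.lookup m i))"

definition gen_ideal :: "nat set \<Rightarrow> 'a::comm_ring_1 mpoly set \<Rightarrow> 'a mpoly set" where
  "gen_ideal C G = {p. \<exists>c. (\<forall>g\<in>G. vars (c g) \<subseteq> C) \<and> p = (\<Sum>g\<in>G. c g * g)}"

text \<open>Isomorphism of the affine varieties Spec K[x_C1]/(G1) and Spec K[x_C2]/(G2):
  polynomial maps F (from the first to the second) and H (back) which are well
  defined on the quotient rings and mutually inverse modulo the ideals.\<close>
definition affine_iso :: "nat set \<Rightarrow> 'a::field mpoly set \<Rightarrow> nat set \<Rightarrow> 'a mpoly set \<Rightarrow> bool" where
  "affine_iso C1 G1 C2 G2 \<longleftrightarrow>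
     (\<exists>F H. (\<forall>i\<in>C2. vars (F i) \<subseteq> C1) \<and> (\<forall>j\<in>C1. vars (H j) \<subseteq> C2) \<and>
        (\<forall>g\<in>G2. subst F g \<in> gen_ideal C1 G1) \<and>
        (\<forall>g\<in>G1. subst H g \<in> gen_ideal C2 G2) \<and>
        (\<forall>j\<in>C1. subst F (H j) - Var j \<in> gen_ideal C1 G1) \<and>
        (\<forall>i\<in>C2. subst H (F i) - Var i \<in> gen_ideal C2 G2))"

text \<open>Coordinates of X_T: x_t is variable 2t, x'_t is variable 2t+1.\<close>
definition tree_coords :: "nat set \<Rightarrow> nat set" where
  "tree_coords V = (\<lambda>t. 2*t) ` V \<union> (\<lambda>t. 2*t+1) ` V"

definition tree_gens :: "nat set \<Rightarrow> (nat \<Rightarrow> nat \<Rightarrow> bool) \<Rightarrow> (nat \<Rightarrow> 'a::field) \<Rightarrow> 'a mpoly set" where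
  "tree_gens V adj \<alpha> = (\<lambda>t. Var (2*t) * Var (2*t+1) - 1
       - Const (\<alpha> t) * (\<Prod>s\<in>{s\<in>V. adj s t}. Var (2*s))) ` V"

definition X_iso :: "nat set \<Rightarrow> (nat \<Rightarrow> nat \<Rightarrow> bool) \<Rightarrow> (nat \<Rightarrow> 'a::field) \<Rightarrow> (nat \<Rightarrow> 'a) \<Rightarrow> bool" where
  "X_iso V adj \<alpha> \<beta> = affine_iso (tree_coords V) (tree_gens V adj \<alpha>) (tree_coords V) (tree_gens V adj \<beta>)"

text \<open>The tree E_m on vertices 0..m-1: centre 0; short branch 1; branch 2-3;
  long branch 4-5-...-(m-1), whose leaf is m-1.\<close>
definition E_edge :: "nat \<Rightarrow> nat \<Rightarrow> nat \<Rightarrow> bool" where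
  "E_edge m s t \<longleftrightarrow> (s,t) \<in> {(0,1),(0,2),(2,3),(0,4)} \<or> (4 \<le> s \<and> t = s+1 \<and> t < m)"

definition E_adj :: "nat \<Rightarrow> nat \<Rightarrow> nat \<Rightarrow> bool" where
  "E_adj m s t \<longleftrightarrow> s < m \<and> t < m \<and> (E_edge m s t \<or> E_edge m t s)"

end

theory Submission
  imports Defs
begin

text \<open>Rescaling the coordinates, \<open>x\<^sub>t \<mapsto> \<mu>\<^sub>t x\<^sub>t\<close> and \<open>x'\<^sub>t \<mapsto> \<mu>\<^sub>t\<^sup>-\<^sup>1 x'\<^sub>t\<close>, is an isomorphism
  \<open>X\<^sub>T(\<alpha>) \<cong> X\<^sub>T(\<beta>)\<close> whenever \<open>\<alpha>\<^sub>t = \<beta>\<^sub>t \<Prod>\<^sub>s\<^sub>-\<^sub>t \<mu>\<^sub>s\<close> for every vertex \<open>t\<close>. So it suffices to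
  solve this multiplicative system for \<open>\<mu>\<close>, which is governed by the adjacency matrix of the
  tree. For \<open>\<bbbE>\<^sub>6\<close> and \<open>\<bbbE>\<^sub>8\<close> that matrix has determinant \<open>\<plusminus>1\<close>, so every \<open>\<alpha>\<close> is reached from
  \<open>\<beta> = 1\<close>; \<open>\<bbbE>\<^sub>7\<close> has an odd number of vertices, hence no perfect matching and a singular
  adjacency matrix, and one free parameter at the leaf remains.\<close>

definition monom_eval :: "(nat \<Rightarrow> 'a::comm_ring_1 mpoly) \<Rightarrow> (nat \<Rightarrow>\<^sub>0 nat) \<Rightarrow> 'a mpoly" where
  "monom_eval \<sigma> m = (\<Prod>i\<in>Poly_Mapping.keys m. \<sigma> i ^ Poly_Mapping.lookup m i)"

lemma monom_eval_superset:
  "finite S \<Longrightarrow> Poly_Mapping.keys m \<subseteq> S \<Longrightarrow>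
   monom_eval \<sigma> m = (\<Prod>i\<in>S. \<sigma> i ^ Poly_Mapping.lookup m i)"
  unfolding monom_eval_def by (rule prod.mono_neutral_left) (auto simp: in_keys_iff)

lemma monom_eval_add: "monom_eval \<sigma> (a + b) = monom_eval \<sigma> a * monom_eval \<sigma> b"
proof -
  let ?S = "Poly_Mapping.keys a \<union> Poly_Mapping.keys b"
  have "monom_eval \<sigma> (a + b) = (\<Prod>i\<in>?S. \<sigma> i ^ Poly_Mapping.lookup (a + b) i)"
    using keys_add[of a b] by (intro monom_eval_superset) auto
  also have "\<dots> = (\<Prod>i\<in>?S. \<sigma> i ^ Poly_Mapping.lookup a i) * (\<Prod>i\<in>?S. \<sigma> i ^ Poly_Mapping.lookup b i)"
    by (simp add: lookup_add power_add prod.distrib)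
  also have "\<dots> = monom_eval \<sigma> a * monom_eval \<sigma> b"
    by (subst (1 2) monom_eval_superset[symmetric]) auto
  finally show ?thesis .
qed

lemma monom_eval_zero [simp]: "monom_eval \<sigma> 0 = 1"
  by (simp add: monom_eval_def)

lemma monom_eval_single: "monom_eval \<sigma> (Poly_Mapping.single i 1) = \<sigma> i"
proof -
  have "Poly_Mapping.keys (Poly_Mapping.single i (1::nat)) = {i}"
    by simp
  then show ?thesis
    by (simp add: monom_eval_def)
qed

lemma Const_add: "Const (a + b) = Const a + Const b"
  by (simp add: Const_def single_add)

lemma Const_mult: "Const (a * b) = Const a * Const b"
  by (simp add: Const_def mult_single)

lemma Const_0 [simp]: "Const 0 = 0"
  by (simp add: Const_def)

lemma Const_1 [simp]: "Const 1 = 1"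
  by (simp add: Const_def)

lemma Const_prod: "Const (\<Prod>i\<in>A. f i) = (\<Prod>i\<in>A. Const (f i))"
  by (induction A rule: infinite_finite_induct) (auto simp: Const_mult)

lemma subst_eq_sum_monom_eval:
  "subst \<sigma> p = (\<Sum>m\<in>Poly_Mapping.keys p. Const (Poly_Mapping.lookup p m) * monom_eval \<sigma> m)"
  by (simp add: subst_def monom_eval_def)

lemma subst_superset:
  "finite S \<Longrightarrow> Poly_Mapping.keys p \<subseteq> S \<Longrightarrow>
   subst \<sigma> p = (\<Sum>m\<in>S. Const (Poly_Mapping.lookup p m) * monom_eval \<sigma> m)"
  unfolding subst_eq_sum_monom_eval by (rule sum.mono_neutral_left) (auto simp: in_keys_iff)

lemma subst_single: "subst \<sigma> (Poly_Mapping.single m c) = Const c * monom_eval \<sigma> m"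
  by (subst subst_superset[of "{m}"]) auto

lemma subst_0 [simp]: "subst \<sigma> 0 = 0"
  by (simp add: subst_def)

lemma subst_add: "subst \<sigma> (p + q) = subst \<sigma> p + subst \<sigma> q"
proof -
  let ?S = "Poly_Mapping.keys p \<union> Poly_Mapping.keys q"
  let ?t = "\<lambda>r m. Const (Poly_Mapping.lookup r m) * monom_eval \<sigma> m"
  have "subst \<sigma> (p + q) = (\<Sum>m\<in>?S. ?t (p + q) m)"
    using keys_add[of p q] by (intro subst_superset) auto
  also have "\<dots> = (\<Sum>m\<in>?S. ?t p m) + (\<Sum>m\<in>?S. ?t q m)"
    by (simp add: lookup_add Const_add distrib_right sum.distrib)
  also have "\<dots> = subst \<sigma> p + subst \<sigma> q"
    by (subst (1 2) subst_superset[symmetric]) auto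
  finally show ?thesis .
qed

lemma subst_diff: "subst \<sigma> (p - q) = subst \<sigma> p - subst \<sigma> q"
  using subst_add[of \<sigma> "p - q" q] by (simp add: eq_diff_eq)

lemma subst_sum: "subst \<sigma> (\<Sum>i\<in>A. f i) = (\<Sum>i\<in>A. subst \<sigma> (f i))"
  by (induction A rule: infinite_finite_induct) (auto simp: subst_add)

lemma poly_mapping_sum_single:
  "p = (\<Sum>m\<in>Poly_Mapping.keys p. Poly_Mapping.single m (Poly_Mapping.lookup p m))"
  by (rule poly_mapping_eqI) (simp add: lookup_sum lookup_single when_def in_keys_iff)

lemma subst_mult: "subst \<sigma> (p * q) = subst \<sigma> p * subst \<sigma> q"
proof -
  let ?P = "Poly_Mapping.keys p" and ?Q = "Poly_Mapping.keys q"
  let ?c = "Poly_Mapping.lookup p" and ?d = "Poly_Mapping.lookup q"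
  have "p * q = (\<Sum>a\<in>?P. Poly_Mapping.single a (?c a)) * (\<Sum>b\<in>?Q. Poly_Mapping.single b (?d b))"
    by (subst (1) poly_mapping_sum_single, subst (2) poly_mapping_sum_single) (rule refl)
  also have "\<dots> = (\<Sum>a\<in>?P. \<Sum>b\<in>?Q. Poly_Mapping.single (a + b) (?c a * ?d b))"
    by (simp add: sum_product mult_single)
  finally have "subst \<sigma> (p * q) =
      (\<Sum>a\<in>?P. \<Sum>b\<in>?Q. (Const (?c a) * monom_eval \<sigma> a) * (Const (?d b) * monom_eval \<sigma> b))"
    by (simp add: subst_sum subst_single Const_mult monom_eval_add mult_ac)
  also have "\<dots> = subst \<sigma> p * subst \<sigma> q"
    by (simp add: subst_eq_sum_monom_eval sum_product)
  finally show ?thesis .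
qed

lemma subst_1 [simp]: "subst \<sigma> 1 = 1"
  by (simp add: subst_def)

lemma subst_prod: "subst \<sigma> (\<Prod>i\<in>A. f i) = (\<Prod>i\<in>A. subst \<sigma> (f i))"
  by (induction A rule: infinite_finite_induct) (auto simp: subst_mult)

lemma subst_Var [simp]: "subst \<sigma> (Var i) = \<sigma> i"
  unfolding Var_def subst_single monom_eval_single by simp

lemma subst_Const [simp]: "subst \<sigma> (Const c) = Const c"
  by (simp add: Const_def subst_single)

lemma vars_Const_mult_Var: "vars (Const c * Var j) \<subseteq> {j}"
  by (simp add: Const_def Var_def mult_single vars_def)

lemma vars_0 [simp]: "vars 0 = {}"
  by (simp add: vars_def)

lemma vars_1 [simp]: "vars 1 = {}"
  by (simp add: vars_def)

lemma generator_in_gen_ideal: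
  assumes "finite G" "g \<in> G"
  shows "g \<in> gen_ideal C G"
proof -
  have "(\<Sum>h\<in>G. (if h = g then 1 else 0) * h) = (\<Sum>h\<in>G. if h = g then h else 0)"
    by (rule sum.cong) auto
  also have "\<dots> = g"
    using assms by (simp add: sum.delta')
  finally have "(\<Sum>h\<in>G. (if h = g then 1 else 0) * h) = g" .
  then show ?thesis
    unfolding gen_ideal_def by (auto split: if_splits intro!: exI[of _ "\<lambda>h. if h = g then 1 else 0"])
qed

lemma zero_in_gen_ideal: "0 \<in> gen_ideal C G"
  unfolding gen_ideal_def by (auto intro!: exI[of _ "\<lambda>_. 0"])

definition rescale :: "(nat \<Rightarrow> 'a::field) \<Rightarrow> nat \<Rightarrow> 'a mpoly" where
  "rescale \<mu> j = Const (if even j then \<mu> (j div 2) else inverse (\<mu> (j div 2))) * Var j"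

lemma subst_rescale_rescale:
  assumes "\<mu> (j div 2) * \<nu> (j div 2) = 1"
  shows "subst (rescale \<mu>) (rescale \<nu> j) = Var j"
proof -
  have "(if even j then \<nu> (j div 2) else inverse (\<nu> (j div 2))) *
        (if even j then \<mu> (j div 2) else inverse (\<mu> (j div 2))) = 1"
    using assms by (simp add: mult.commute flip: inverse_mult_distrib)
  then show ?thesis
    by (simp add: rescale_def subst_mult mult.assoc[symmetric] Const_mult[symmetric])
qed

lemma subst_rescale_tree_generator:
  assumes "\<mu> t \<noteq> 0" and "\<beta> t * (\<Prod>s\<in>N. \<mu> s) = \<alpha> t"
  shows "subst (rescale \<mu>) (Var (2*t) * Var (2*t+1) - 1 - Const (\<beta> t) * (\<Prod>s\<in>N. Var (2*s)))
       = Var (2*t) * Var (2*t+1) - 1 - Const (\<alpha> t) * (\<Prod>s\<in>N. Var (2*s))"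
proof -
  have "rescale \<mu> (2*t) * rescale \<mu> (2*t+1) = Var (2*t) * Var (2*t+1)"
    using assms(1) by (simp add: rescale_def mult_ac Const_mult[symmetric])
  moreover have "(\<Prod>s\<in>N. rescale \<mu> (2*s)) = Const (\<Prod>s\<in>N. \<mu> s) * (\<Prod>s\<in>N. Var (2*s))"
    by (simp add: rescale_def prod.distrib Const_prod)
  ultimately show ?thesis
    by (simp add: subst_diff subst_mult subst_prod mult.assoc[symmetric] Const_mult[symmetric] assms(2))
qed

lemma subst_rescale_tree_gens:
  assumes "finite V" "\<forall>t\<in>V. \<mu> t \<noteq> 0" "\<forall>t\<in>V. \<beta> t * (\<Prod>s\<in>{s\<in>V. adj s t}. \<mu> s) = \<alpha> t"
    and "g \<in> tree_gens V adj \<beta>"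
  shows "subst (rescale \<mu>) g \<in> gen_ideal C (tree_gens V adj \<alpha>)"
proof -
  obtain t where "t \<in> V"
    and g: "g = Var (2*t) * Var (2*t+1) - 1 - Const (\<beta> t) * (\<Prod>s\<in>{s\<in>V. adj s t}. Var (2*s))"
    using assms(4) by (auto simp: tree_gens_def)
  moreover have "subst (rescale \<mu>) g =
      Var (2*t) * Var (2*t+1) - 1 - Const (\<alpha> t) * (\<Prod>s\<in>{s\<in>V. adj s t}. Var (2*s))"
    unfolding g using \<open>t \<in> V\<close> assms(2,3) by (intro subst_rescale_tree_generator) auto
  ultimately have "subst (rescale \<mu>) g \<in> tree_gens V adj \<alpha>"
    by (auto simp: tree_gens_def)
  then show ?thesis
    using assms(1) by (intro generator_in_gen_ideal) (auto simp: tree_gens_def)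
qed

lemma X_iso_rescale:
  fixes \<alpha> \<beta> \<mu> :: "nat \<Rightarrow> 'a::field"
  assumes fin: "finite V" and nz: "\<forall>t\<in>V. \<mu> t \<noteq> 0"
    and weights: "\<forall>t\<in>V. \<beta> t * (\<Prod>s\<in>{s\<in>V. adj s t}. \<mu> s) = \<alpha> t"
  shows "X_iso V adj \<alpha> \<beta>"
proof -
  define \<nu> where "\<nu> t = inverse (\<mu> t)" for t
  have nz': "\<forall>t\<in>V. \<nu> t \<noteq> 0"
    using nz by (simp add: \<nu>_def)
  have weights': "\<forall>t\<in>V. \<alpha> t * (\<Prod>s\<in>{s\<in>V. adj s t}. \<nu> s) = \<beta> t"
  proof
    fix t assume "t \<in> V"
    have "(\<Prod>s\<in>{s\<in>V. adj s t}. \<mu> s) \<noteq> 0"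
      using nz fin by (simp add: prod_zero_iff)
    moreover have "\<alpha> t = \<beta> t * (\<Prod>s\<in>{s\<in>V. adj s t}. \<mu> s)"
      using weights \<open>t \<in> V\<close> by simp
    ultimately show "\<alpha> t * (\<Prod>s\<in>{s\<in>V. adj s t}. \<nu> s) = \<beta> t"
      using prod_inversef[where f = \<mu> and A = "{s\<in>V. adj s t}"] by (simp add: \<nu>_def comp_def)
  qed
  have inverses:
      "subst (rescale \<mu>) (rescale \<nu> j) - Var j \<in> gen_ideal C G"
      "subst (rescale \<nu>) (rescale \<mu> j) - Var j \<in> gen_ideal C G"
    if "j \<in> tree_coords V" for j C G
    using that nz by (auto simp: tree_coords_def \<nu>_def subst_rescale_rescale zero_in_gen_ideal)
  have "vars (rescale \<rho> i) \<subseteq> {i}" for \<rho> :: "nat \<Rightarrow> 'a" and i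
    unfolding rescale_def by (rule vars_Const_mult_Var)
  then show ?thesis
    unfolding X_iso_def affine_iso_def
    using fin nz nz' weights weights' inverses
    by (intro exI[of _ "rescale \<mu>"] exI[of _ "rescale \<nu>"]) (auto intro: subst_rescale_tree_gens)
qed

lemma E_adj_neighbours:
  assumes "6 \<le> m"
  shows "{s. s < m \<and> E_adj m s 0} = {1, 2, 4}"
    and "{s. s < m \<and> E_adj m s 1} = {0}"
    and "{s. s < m \<and> E_adj m s 2} = {0, 3}"
    and "{s. s < m \<and> E_adj m s 3} = {2}"
    and "{s. s < m \<and> E_adj m s 4} = {0, 5}"
    and "5 \<le> t \<Longrightarrow> t < m \<Longrightarrow> {s. s < m \<and> E_adj m s t} = insert (t - 1) ({t + 1} \<inter> {..<m})"
  using assms by (auto simp: E_adj_def E_edge_def)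

text \<open>The rescalings \<open>\<mu>\<close> below solve \<open>\<alpha>\<^sub>t = \<beta>\<^sub>t \<Prod>\<^sub>s\<^sub>-\<^sub>t \<mu>\<^sub>s\<close> from the leaves inwards:
  a leaf determines \<open>\<mu>\<close> at its unique neighbour.\<close>

lemma X_iso_E6:
  fixes \<alpha> :: "nat \<Rightarrow> 'a::field"
  assumes "\<forall>t<6. \<alpha> t \<noteq> 0"
  shows "X_iso {..<6} (E_adj 6) \<alpha> (\<lambda>_. 1)"
proof -
  have nonzero: "\<alpha> 0 \<noteq> 0" "\<alpha> 1 \<noteq> 0" "\<alpha> 2 \<noteq> 0" "\<alpha> 3 \<noteq> 0" "\<alpha> 4 \<noteq> 0" "\<alpha> 5 \<noteq> 0"
    using assms by auto
  have vertex: "t \<in> {..<6} \<Longrightarrow> t = 0 \<or> t = 1 \<or> t = 2 \<or> t = 3 \<or> t = 4 \<or> t = 5" for t :: nat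
    by auto
  show ?thesis
    using nonzero by (intro X_iso_rescale[where
          \<mu> = "(!) [\<alpha> 1, \<alpha> 0 / (\<alpha> 3 * \<alpha> 5), \<alpha> 3, \<alpha> 2 / \<alpha> 1, \<alpha> 5, \<alpha> 4 / \<alpha> 1]"])
      (auto dest!: vertex simp: E_adj_neighbours E_adj_neighbours[unfolded One_nat_def])
qed

lemma X_iso_E7:
  fixes \<alpha> :: "nat \<Rightarrow> 'a::field"
  assumes "\<forall>t<7. \<alpha> t \<noteq> 0"
  shows "X_iso {..<7} (E_adj 7) \<alpha> (\<lambda>t. if t = 6 then \<alpha> 6 * \<alpha> 1 / \<alpha> 4 else 1)"
proof -
  have nonzero: "\<alpha> 0 \<noteq> 0" "\<alpha> 1 \<noteq> 0" "\<alpha> 2 \<noteq> 0" "\<alpha> 3 \<noteq> 0" "\<alpha> 4 \<noteq> 0" "\<alpha> 5 \<noteq> 0" "\<alpha> 6 \<noteq> 0"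
    using assms by auto
  have vertex: "t \<in> {..<7} \<Longrightarrow> t = 0 \<or> t = 1 \<or> t = 2 \<or> t = 3 \<or> t = 4 \<or> t = 5 \<or> t = 6" for t :: nat
    by auto
  show ?thesis
    using nonzero by (intro X_iso_rescale[where
          \<mu> = "(!) [\<alpha> 1, \<alpha> 0 / \<alpha> 3, \<alpha> 3, \<alpha> 2 / \<alpha> 1, 1, \<alpha> 4 / \<alpha> 1, \<alpha> 5]"])
      (auto dest!: vertex simp: E_adj_neighbours E_adj_neighbours[unfolded One_nat_def])
qed

lemma X_iso_E8:
  fixes \<alpha> :: "nat \<Rightarrow> 'a::field"
  assumes "\<forall>t<8. \<alpha> t \<noteq> 0"
  shows "X_iso {..<8} (E_adj 8) \<alpha> (\<lambda>_. 1)"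
proof -
  have nonzero: "\<alpha> 0 \<noteq> 0" "\<alpha> 1 \<noteq> 0" "\<alpha> 2 \<noteq> 0" "\<alpha> 3 \<noteq> 0" "\<alpha> 4 \<noteq> 0" "\<alpha> 5 \<noteq> 0" "\<alpha> 6 \<noteq> 0" "\<alpha> 7 \<noteq> 0"
    using assms by auto
  have vertex: "t \<in> {..<8} \<Longrightarrow> t = 0 \<or> t = 1 \<or> t = 2 \<or> t = 3 \<or> t = 4 \<or> t = 5 \<or> t = 6 \<or> t = 7"
    for t :: nat
    by auto
  show ?thesis
    using nonzero by (intro X_iso_rescale[where
          \<mu> = "(!) [\<alpha> 1, \<alpha> 0 * \<alpha> 7 / (\<alpha> 3 * \<alpha> 5), \<alpha> 3, \<alpha> 2 / \<alpha> 1,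
                    \<alpha> 5 / \<alpha> 7, \<alpha> 4 / \<alpha> 1, \<alpha> 7, \<alpha> 6 * \<alpha> 1 / \<alpha> 4]"])
      (auto dest!: vertex simp: E_adj_neighbours E_adj_neighbours[unfolded One_nat_def])
qed

theorem mainTheorem17:
  fixes \<alpha> :: "nat \<Rightarrow> 'a::field"
  shows "((\<forall>t<6. \<alpha> t \<noteq> 0) \<longrightarrow> X_iso {..<6} (E_adj 6) \<alpha> (\<lambda>_. 1))
       \<and> ((\<forall>t<7. \<alpha> t \<noteq> 0) \<longrightarrow>
           (\<exists>a. a \<noteq> 0 \<and> X_iso {..<7} (E_adj 7) \<alpha> (\<lambda>t. if t = 6 then a else 1)))
       \<and> ((\<forall>t<8. \<alpha> t \<noteq> 0) \<longrightarrow> X_iso {..<8} (E_adj 8) \<alpha> (\<lambda>_. 1))"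
proof (intro conjI impI)
  assume "\<forall>t<7. \<alpha> t \<noteq> 0"
  then have "\<alpha> 6 * \<alpha> 1 / \<alpha> 4 \<noteq> 0" and "X_iso {..<7} (E_adj 7) \<alpha> (\<lambda>t. if t = 6 then \<alpha> 6 * \<alpha> 1 / \<alpha> 4 else 1)"
    by (simp_all add: X_iso_E7)
  then show "\<exists>a. a \<noteq> 0 \<and> X_iso {..<7} (E_adj 7) \<alpha> (\<lambda>t. if t = 6 then a else 1)"
    by blast
qed (blast intro: X_iso_E6 X_iso_E8)+

end
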